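(* For every semigroup $S$ and every endomorphism $\theta$ of $S$, the Bruck--Reilly extension $\mathsf{BR}(S,\theta)$ is not DSC.
   Context: $\mathsf{BR}(S,\theta)$ is the set $\mathbb{N}_0\times S\times\mathbb{N}_0$ with multiplication $(m,s,n)(p,t,q)=(m-n+k,\ (s\theta^{k-n})(t\theta^{k-p}),\ q-p+k)$ where $k=\max(n,p)$ and $\theta^0$ is the identity map. For a semigroup $T$, a diagonal subsemigroup of $T\times T$ is a subsemigroup containing $\{(t,t)\colon t\in T\}$; a congruence is a symmetric and transitive diagonal subsemigroup; $T$ is DSC if every diagonal subsemigroup of $T\times T$ is a congruence on $T$. *)

theory Defs
  imports Main
begin

text \<open>Multiplication of the Bruck--Reilly extension BR(S, theta) on the set
  nat x S x nat. Here k = max n p, and m - n + k is written m + (k - n)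
  (k >= n) to avoid truncated natural subtraction.\<close>
definition br_mult :: "('a::semigroup_mult \<Rightarrow> 'a) \<Rightarrow>
    nat \<times> 'a \<times> nat \<Rightarrow> nat \<times> 'a \<times> nat \<Rightarrow> nat \<times> 'a \<times> nat" where
  "br_mult \<theta> x y =
     (case x of (m, s, n) \<Rightarrow> case y of (p, t, q) \<Rightarrow>
        (let k = max n p in
          (m + (k - n), (\<theta> ^^ (k - n)) s * (\<theta> ^^ (k - p)) t, q + (k - p))))"

definition semigroup_endo :: "('a::semigroup_mult \<Rightarrow> 'a) \<Rightarrow> bool" where
  "semigroup_endo \<theta> \<longleftrightarrow> (\<forall>x y. \<theta> (x * y) = \<theta> x * \<theta> y)"

definition diagonal_subsemigroup :: "('b \<Rightarrow> 'b \<Rightarrow> 'b) \<Rightarrow> ('b \<times> 'b) set \<Rightarrow> bool" where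
  "diagonal_subsemigroup mult R \<longleftrightarrow>
     (\<forall>a b c d. (a, b) \<in> R \<longrightarrow> (c, d) \<in> R \<longrightarrow> (mult a c, mult b d) \<in> R) \<and>
     (\<forall>t. (t, t) \<in> R)"

definition is_congruence :: "('b \<Rightarrow> 'b \<Rightarrow> 'b) \<Rightarrow> ('b \<times> 'b) set \<Rightarrow> bool" where
  "is_congruence mult R \<longleftrightarrow> diagonal_subsemigroup mult R \<and> sym R \<and> trans R"

definition DSC :: "('b \<Rightarrow> 'b \<Rightarrow> 'b) \<Rightarrow> bool" where
  "DSC mult \<longleftrightarrow> (\<forall>R. diagonal_subsemigroup mult R \<longrightarrow> is_congruence mult R)"

end

theory Submission
  imports Defs
begin

text \<open>The map (m, s, n) \<mapsto> m - n is a homomorphism from BR(S, \<theta>) onto (\<int>, +). Pulling back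
  the order of \<int> along it gives a relation that contains the diagonal and is closed under
  multiplication, but is not symmetric, since the image contains two distinct integers.\<close>

definition br_degree :: "nat \<times> 'a \<times> nat \<Rightarrow> int" where
  "br_degree x = (case x of (m, s, n) \<Rightarrow> int m - int n)"

lemma br_degree_mult: "br_degree (br_mult \<theta> x y) = br_degree x + br_degree y"
  by (cases x; cases y) (auto simp: br_mult_def br_degree_def Let_def)

lemma diagonal_subsemigroup_hom_le:
  fixes f :: "'b \<Rightarrow> 'c::ordered_ab_group_add"
  assumes "\<And>x y. f (mult x y) = f x + f y"
  shows "diagonal_subsemigroup mult {(x, y). f x \<le> f y}"
  unfolding diagonal_subsemigroup_def by (auto simp: assms add_mono)

lemma not_DSC_if_hom_nonconstant:
  fixes f :: "'b \<Rightarrow> 'c::ordered_ab_group_add"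
  assumes hom: "\<And>x y. f (mult x y) = f x + f y" and "f a < f b"
  shows "\<not> DSC mult"
proof
  assume "DSC mult"
  with diagonal_subsemigroup_hom_le[OF hom]
  have "sym {(x, y). f x \<le> f y}"
    unfolding DSC_def is_congruence_def by blast
  with \<open>f a < f b\<close> show False
    unfolding sym_def by (auto simp: less_le_not_le)
qed

theorem mainTheorem11:
  fixes \<theta> :: "'a::semigroup_mult \<Rightarrow> 'a"
  assumes "semigroup_endo \<theta>"
  shows "\<not> DSC (br_mult \<theta>)"
proof (rule not_DSC_if_hom_nonconstant)
  show "br_degree (br_mult \<theta> x y) = br_degree x + br_degree y" for x y
    by (rule br_degree_mult)
  show "br_degree (0, undefined :: 'a, 0) < br_degree (1, undefined :: 'a, 0)"
    by (simp add: br_degree_def)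
qed

end
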